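(* Let $H=(V,E)$ be a hypergraph whose vertex set $V$ is a partition of $[n]$ into sets of cardinality at least $2$, and suppose $H$ is downward-closed (for every $e\in E$ and every $e'\subseteq e$ with $|e'|>1$, $e'\in E$). Then \[\operatorname{aff}\mathrm{MC}^H=\Big\{w\in\mathbb{R}^{\mathcal{J}^H}\ \Big|\ w(I)=1\ \forall I\in V;\ \ w_J=\sum_{J'\in\mathcal{J}^{e'}:\, J'\supsetneq J}w_{J'}\ \ \forall e,e'\in L(V)\cup E \text{ with } e\subsetneq e',\ |e'|=|e|+1,\ \forall J\in\mathcal{J}^e\Big\}.\]
   Context: Let $n$ be a positive integer, $[n]=\{1,\dots,n\}$. A hypergraph $H=(V,E)$ here has as vertex set $V$ a family of pairwise disjoint subsets of $[n]$, each of cardinality at least $2$, and hyperedge set $E$ consisting of subsets $e\subseteq V$ with $|e|\ge 2$. Write $L(V)=\{\{I\}: I\in V\}$. For a nonempty $e\subseteq V$, $\mathcal{J}^e$ denotes the family of sets $J\subseteq \bigcup_{I\in e} I$ with $|J\cap I|=1$ for every $I\in e$. Let $\mathcal{J}^H=\bigcup_{e\in L(V)\cup E}\mathcal{J}^e$. For $w\in\mathbb{R}^{\mathcal{J}^H}$ write $w_i=w_{\{i\}}$ and $w(A)=\sum_{i\in A}w_i$. Let $\mathscr{S}^H=\{w\in\{0,1\}^{\mathcal{J}^H}: w(I)=1\ \forall I\in V;\ w_J=\prod_{i\in J}w_i\ \forall J\in\mathcal{J}^H, |J|>1\}$, $\mathrm{MC}^H=\operatorname{conv}\mathscr{S}^H$,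 and $\operatorname{aff}$ denotes affine hull. *)

theory Defs
  imports "HOL-Analysis.Analysis" "HOL-Library.Function_Algebras"
begin

instantiation "fun" :: (type, real_vector) real_vector
begin
definition scaleR_fun :: "real \<Rightarrow> ('a \<Rightarrow> 'b) \<Rightarrow> 'a \<Rightarrow> 'b"
  where "scaleR_fun r f = (\<lambda>x. r *\<^sub>R f x)"
instance
  by standard (auto simp: scaleR_fun_def fun_eq_iff scaleR_add_right scaleR_add_left)
end

definition is_hypergraph :: "nat \<Rightarrow> nat set set \<Rightarrow> nat set set set \<Rightarrow> bool" where
  "is_hypergraph n V E \<longleftrightarrow>
     (\<forall>I\<in>V. I \<subseteq> {1..n} \<and> card I \<ge> 2) \<and> pairwise disjnt V \<and>
     (\<forall>e\<in>E. e \<subseteq> V \<and> card e \<ge> 2)"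

definition downward_closed :: "nat set set set \<Rightarrow> bool" where
  "downward_closed E \<longleftrightarrow> (\<forall>e\<in>E. \<forall>e'. e' \<subseteq> e \<and> card e' > 1 \<longrightarrow> e' \<in> E)"

definition LV :: "nat set set \<Rightarrow> nat set set set" where
  "LV V = (\<lambda>I. {I}) ` V"

definition JJ :: "nat set set \<Rightarrow> nat set set" where
  "JJ e = {J. J \<subseteq> \<Union>e \<and> (\<forall>I\<in>e. card (J \<inter> I) = 1)}"

definition JH :: "nat set set \<Rightarrow> nat set set set \<Rightarrow> nat set set" where
  "JH V E = \<Union> (JJ ` (LV V \<union> E))"

text \<open>Elements of \<real>^{\<J>^H} are represented as functions on all finite index sets
  that vanish outside \<J>^H.\<close>
definition RJH :: "nat set set \<Rightarrow> nat set set set \<Rightarrow> (nat set \<Rightarrow> real) set" where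
  "RJH V E = {w. \<forall>J. J \<notin> JH V E \<longrightarrow> w J = 0}"

text \<open>w(A) = sum of w_i = w_{{i}} over i \<in> A\<close>
definition wsum :: "(nat set \<Rightarrow> real) \<Rightarrow> nat set \<Rightarrow> real" where
  "wsum w A = (\<Sum>i\<in>A. w {i})"

definition SH :: "nat set set \<Rightarrow> nat set set set \<Rightarrow> (nat set \<Rightarrow> real) set" where
  "SH V E = {w \<in> RJH V E.
      (\<forall>J\<in>JH V E. w J \<in> {0, 1}) \<and>
      (\<forall>I\<in>V. wsum w I = 1) \<and>
      (\<forall>J\<in>JH V E. card J > 1 \<longrightarrow> w J = (\<Prod>i\<in>J. w {i}))}"

definition MC :: "nat set set \<Rightarrow> nat set set set \<Rightarrow> (nat set \<Rightarrow> real) set" where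
  "MC V E = convex hull (SH V E)"

end

theory Submission
  imports Defs
begin

text \<open>
  Every point of SH V E is the product of its singleton coordinates, so summing over one block
  shows that it satisfies the stated equations; these cut out an affine set.

  Conversely, extend a solution w by the value 1 at the empty set. On the downward-closed family
  of faces {{}} \<union> L(V) \<union> E, the values of w then form a family of marginals that is consistent
  under deleting one block from a face. Every such family is the family of marginals of a signed
  measure \<mu> on the transversals (choices of one element in every block): adding the faces by
  increasing size, the defect on a new maximal face e is corrected by a signed measure supported on
  the transversals that agree with a fixed one outside e, and consistency makes its marginal vanish
  on every face not containing e. A transversal x gives the point vertex x of SH V E with
  coordinate 1 exactly at the J \<subseteq> x ` V. The total mass of \<mu> is its marginal at the empty face,
  i.e. 1, so w, the combination of the points vertex x with coefficients \<mu> x, is an affine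
  combination of points of SH V E.
\<close>

lemma affine_hull_sum_mem:
  fixes f :: "'a \<Rightarrow> 'b::real_vector"
  assumes "finite A" "sum u A = 1" "f ` A \<subseteq> S"
  shows "(\<Sum>a\<in>A. u a *\<^sub>R f a) \<in> affine hull S"
proof -
  define u' where "u' v = sum u {a \<in> A. f a = v}" for v
  have "sum u' (f ` A) = 1"
    using sum.image_gen[OF \<open>finite A\<close>, of u f] assms(2) by (simp add: u'_def)
  moreover have "(\<Sum>v\<in>f ` A. u' v *\<^sub>R v) = (\<Sum>a\<in>A. u a *\<^sub>R f a)"
    using sum.image_gen[OF \<open>finite A\<close>, of "\<lambda>a. u a *\<^sub>R f a" f]
    by (simp add: u'_def scaleR_sum_left)
  moreover have "A \<noteq> {}"
    using assms(2) by auto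
  ultimately show ?thesis
    unfolding affine_hull_explicit using assms(1,3) by blast
qed

lemma psubset_card_Suc_obtain:
  assumes "A \<subset> B" "card B = card A + 1" "finite B"
  obtains b where "b \<in> B" "A = B - {b}"
proof -
  have "finite A"
    using assms(1,3) finite_subset by blast
  then have "card (B - A) = 1"
    using assms(1,2) by (simp add: card_Diff_subset)
  then obtain b where "B - A = {b}"
    by (rule card_1_singletonE)
  then show thesis
    using that assms(1) by blast
qed

lemma image_eq_insert_Diff: "a \<in> A \<Longrightarrow> f ` A = insert (f a) (f ` (A - {a}))"
  by (metis image_insert insert_Diff)

lemma prod_of_bool: "finite A \<Longrightarrow> (\<Prod>a\<in>A. of_bool (P a)) = (of_bool (\<forall>a\<in>A. P a) :: 'a::comm_semiring_1)"
  by (induction A rule: finite_induct) auto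

lemma sum_fun_apply: "(\<Sum>a\<in>A. f a) x = (\<Sum>a\<in>A. f a x)"
  by (induction A rule: infinite_finite_induct) auto

section \<open>Transversals of a family of disjoint blocks\<close>

locale block_family =
  fixes V :: "nat set set"
  assumes finite_V: "finite V"
    and finite_block: "I \<in> V \<Longrightarrow> finite I"
    and block_nonempty: "I \<in> V \<Longrightarrow> I \<noteq> {}"
    and disjoint_blocks: "pairwise disjnt V"
begin

abbreviation \<X> :: "(nat set \<Rightarrow> nat) set" where
  "\<X> \<equiv> PiE V (\<lambda>I. I)"

lemma finite_\<X>: "finite \<X>"
  using finite_V finite_block by (auto intro!: finite_PiE)

lemma \<X>_nonempty: "\<X> \<noteq> {}"
  using block_nonempty by (auto simp: PiE_eq_empty_iff)

lemma fun_upd_in_\<X>: "x \<in> \<X> \<Longrightarrow> I \<in> V \<Longrightarrow> i \<in> I \<Longrightarrow> x(I := i) \<in> \<X>"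
  by (auto simp: PiE_iff extensional_def)

lemma image_Int_block:
  assumes "e \<subseteq> V" "x \<in> \<X>" "I \<in> V"
  shows "x ` e \<inter> I = (if I \<in> e then {x I} else {})"
proof -
  have "I' = I" if "I' \<in> e" "x I' \<in> I" for I'
  proof (rule ccontr)
    assume "I' \<noteq> I"
    then have "disjnt I' I"
      using pairwiseD[OF disjoint_blocks] that(1) assms(1,3) by blast
    then show False
      using PiE_mem[OF assms(2), of I'] that assms(1) by (auto simp: disjnt_iff)
  qed
  then show ?thesis
    using PiE_mem[OF assms(2,3)] by auto
qed

lemma image_eq_iff:
  assumes "e \<subseteq> V" "x \<in> \<X>" "z \<in> \<X>"
  shows "x ` e = z ` e \<longleftrightarrow> (\<forall>I\<in>e. x I = z I)"
proof
  assume eq: "x ` e = z ` e"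
  show "\<forall>I\<in>e. x I = z I"
  proof
    fix I assume "I \<in> e"
    then have "{x I} = {z I}"
      using eq image_Int_block[OF assms(1,2)] image_Int_block[OF assms(1,3)] assms(1) by force
    then show "x I = z I"
      by simp
  qed
qed auto

lemma image_subset_image_iff:
  assumes "e \<subseteq> V" "x \<in> \<X>" "y \<in> \<X>"
  shows "y ` e \<subseteq> x ` V \<longleftrightarrow> x ` e = y ` e"
proof
  assume sub: "y ` e \<subseteq> x ` V"
  have "x I = y I" if "I \<in> e" for I
  proof -
    have "y I \<in> x ` V \<inter> I"
      using sub that PiE_mem[OF assms(3)] assms(1) by blast
    also have "x ` V \<inter> I = {x I}"
      using image_Int_block[of V x I] assms that by auto
    finally show ?thesis
      by simp
  qed
  then show "x ` e = y ` e"
    by auto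
qed (use assms(1) in auto)

lemma image_in_JJ:
  assumes "e \<subseteq> V" "x \<in> \<X>"
  shows "x ` e \<in> JJ e"
  using image_Int_block[OF assms] PiE_mem[OF assms(2)] assms(1)
  unfolding JJ_def by fastforce

lemma JJ_obtain_image:
  assumes "e \<subseteq> V" "J \<in> JJ e"
  obtains x where "x \<in> \<X>" "x ` e = J"
proof -
  have single: "\<exists>!i. i \<in> J \<inter> I" if "I \<in> e" for I
  proof -
    have "card (J \<inter> I) = 1"
      using assms(2) that unfolding JJ_def by blast
    then obtain i where "J \<inter> I = {i}"
      by (rule card_1_singletonE)
    then show ?thesis
      by auto
  qed
  define x where "x = restrict (\<lambda>I. if I \<in> e then THE i. i \<in> J \<inter> I else SOME i. i \<in> I) V"
  have x_e: "x I \<in> J \<inter> I" if "I \<in> e" for I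
    using theI'[OF single[OF that]] that assms(1) by (auto simp: x_def)
  have "x I \<in> I" if "I \<in> V" for I
  proof (cases "I \<in> e")
    case True
    then show ?thesis
      using x_e by blast
  next
    case False
    then show ?thesis
      using that block_nonempty[OF that] by (simp add: x_def some_in_eq)
  qed
  moreover have "x \<in> extensional V"
    by (simp add: x_def)
  ultimately have "x \<in> \<X>"
    by (simp add: PiE_iff)
  moreover have "x ` e = J"
  proof
    show "J \<subseteq> x ` e"
    proof
      fix j assume "j \<in> J"
      then obtain I where "I \<in> e" "j \<in> I"
        using assms(2) unfolding JJ_def by blast
      then show "j \<in> x ` e"
        using x_e single \<open>j \<in> J\<close> by blast
    qed
  qed (use x_e in blast)
  ultimately show thesis
    using that by blast
qed

lemma JJ_finite:
  assumes "e \<subseteq> V" "J \<in> JJ e"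
  shows "finite J"
proof -
  obtain x where "x \<in> \<X>" "x ` e = J"
    by (rule JJ_obtain_image[OF assms])
  then show ?thesis
    using finite_imageI[OF finite_subset[OF assms(1) finite_V], of x] by simp
qed

lemma notin_image_Diff_block:
  assumes "I \<in> e" "e \<subseteq> V" "y \<in> \<X>" "i \<in> I"
  shows "i \<notin> y ` (e - {I})"
  using image_Int_block[of "e - {I}" y I] assms by auto

lemma supersets_in_JJ:
  assumes "I \<in> e" "e \<subseteq> V" "y \<in> \<X>"
  shows "{J' \<in> JJ e. y ` (e - {I}) \<subset> J'} = (\<lambda>i. insert i (y ` (e - {I}))) ` I"
proof (intro set_eqI iffI)
  fix J' assume "J' \<in> {J' \<in> JJ e. y ` (e - {I}) \<subset> J'}"
  then have J': "J' \<in> JJ e" "y ` (e - {I}) \<subset> J'"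
    by simp_all
  obtain x where x: "x \<in> \<X>" "x ` e = J'"
    by (rule JJ_obtain_image[OF assms(2) J'(1)])
  have "x ` e \<subseteq> x ` V"
    using assms(2) by (rule image_mono)
  then have "y ` (e - {I}) \<subseteq> x ` V"
    using J'(2) x(2) by simp
  then have "x ` (e - {I}) = y ` (e - {I})"
    using image_subset_image_iff[of "e - {I}" x y] x(1) assms by blast
  then have "J' = insert (x I) (y ` (e - {I}))"
    using x(2) image_eq_insert_Diff[OF assms(1), of x] by simp
  moreover have "x I \<in> I"
    using PiE_mem[OF x(1)] assms(1,2) by blast
  ultimately show "J' \<in> (\<lambda>i. insert i (y ` (e - {I}))) ` I"
    by blast
next
  fix J' assume "J' \<in> (\<lambda>i. insert i (y ` (e - {I}))) ` I"
  then obtain i where i: "i \<in> I" "J' = insert i (y ` (e - {I}))"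
    by blast
  have "J' = (y(I := i)) ` e"
    by (simp only: fun_upd_image if_P[OF assms(1)] i(2))
  then have "J' \<in> JJ e"
    using image_in_JJ[OF assms(2) fun_upd_in_\<X>[OF assms(3) _ i(1)]] assms(1,2) by blast
  moreover have "i \<notin> y ` (e - {I})"
    using notin_image_Diff_block[OF assms i(1)] .
  ultimately show "J' \<in> {J' \<in> JJ e. y ` (e - {I}) \<subset> J'}"
    using i(2) by blast
qed

lemma sum_supersets_in_JJ:
  assumes "I \<in> e" "e \<subseteq> V" "y \<in> \<X>"
  shows "(\<Sum>J'\<in>{J' \<in> JJ e. y ` (e - {I}) \<subset> J'}. w J') = (\<Sum>i\<in>I. w (insert i (y ` (e - {I}))))"
proof -
  have "inj_on (\<lambda>i. insert i (y ` (e - {I}))) I"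
  proof (rule inj_onI)
    fix i j assume "i \<in> I" "insert i (y ` (e - {I})) = insert j (y ` (e - {I}))"
    then have "i \<in> insert j (y ` (e - {I}))" "i \<notin> y ` (e - {I})"
      using notin_image_Diff_block[OF assms] by (metis insertI1, blast)
    then show "i = j"
      by simp
  qed
  then show ?thesis
    by (simp add: supersets_in_JJ[OF assms] sum.reindex)
qed

section \<open>Signed measures on transversals with prescribed marginals\<close>

lemma sum_by_coordinate:
  assumes "I \<in> V" "c \<in> I" "S \<subseteq> \<X>"
    and closed: "\<And>x i. x \<in> S \<Longrightarrow> i \<in> I \<Longrightarrow> x(I := i) \<in> S"
  shows "sum h S = (\<Sum>z\<in>{x \<in> S. x I = c}. \<Sum>i\<in>I. h (z(I := i)))"
proof -
  let ?S\<^sub>0 = "{x \<in> S. x I = c}"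
  have "bij_betw (\<lambda>(z, i). z(I := i)) (?S\<^sub>0 \<times> I) S"
  proof (rule bij_betw_imageI)
    show "inj_on (\<lambda>(z, i). z(I := i)) (?S\<^sub>0 \<times> I)"
    proof (rule inj_onI)
      fix p q
      assume "p \<in> ?S\<^sub>0 \<times> I" "q \<in> ?S\<^sub>0 \<times> I" and eq: "(\<lambda>(z, i). z(I := i)) p = (\<lambda>(z, i). z(I := i)) q"
      obtain z i z' i' where pq: "p = (z, i)" "q = (z', i')"
        by (cases p, cases q)
      have "z I = c" "z' I = c" "z(I := i) = z'(I := i')"
        using \<open>p \<in> ?S\<^sub>0 \<times> I\<close> \<open>q \<in> ?S\<^sub>0 \<times> I\<close> eq by (simp_all add: pq)
      then have "z = z'" "i = i'"
        unfolding fun_eq_iff by (metis fun_upd_apply)+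
      then show "p = q"
        using pq by simp
    qed
    have "x \<in> (\<lambda>(z, i). z(I := i)) ` (?S\<^sub>0 \<times> I)" if "x \<in> S" for x
    proof (rule rev_image_eqI)
      show "(x(I := c), x I) \<in> ?S\<^sub>0 \<times> I"
        using that closed assms PiE_mem by auto
    qed simp
    then show "(\<lambda>(z, i). z(I := i)) ` (?S\<^sub>0 \<times> I) = S"
      using closed by auto
  qed
  then have "sum h S = (\<Sum>(z, i)\<in>?S\<^sub>0 \<times> I. h (z(I := i)))"
    by (simp add: sum.reindex_bij_betw[symmetric] case_prod_unfold)
  then show ?thesis
    by (simp add: sum.cartesian_product)
qed

text \<open>Here x ` e stands for the restriction of x to e: as the blocks are disjoint, it determines
  that restriction (image_eq_iff) and it ranges exactly over JJ e (image_in_JJ, JJ_obtain_image).\<close>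

definition marginal :: "((nat set \<Rightarrow> nat) \<Rightarrow> real) \<Rightarrow> nat set set \<Rightarrow> nat set \<Rightarrow> real" where
  "marginal \<mu> e J = (\<Sum>x\<in>{x \<in> \<X>. x ` e = J}. \<mu> x)"

lemma marginal_empty: "marginal \<mu> {} {} = sum \<mu> \<X>"
  by (simp add: marginal_def)

lemma marginal_add: "marginal (\<lambda>x. \<mu> x + \<nu> x) e J = marginal \<mu> e J + marginal \<nu> e J"
  by (simp add: marginal_def sum.distrib)

lemma marginal_Diff_block:
  assumes "I \<in> e" "e \<subseteq> V" "y \<in> \<X>"
  shows "marginal \<mu> (e - {I}) (y ` (e - {I})) = (\<Sum>i\<in>I. marginal \<mu> e (insert i (y ` (e - {I}))))"
proof -
  let ?J = "y ` (e - {I})"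
  have IV: "I \<in> V"
    using assms by blast
  have fibre: "{x \<in> {x \<in> \<X>. x ` (e - {I}) = ?J}. x I = i} = {x \<in> \<X>. x ` e = insert i ?J}"
    if "i \<in> I" for i
  proof (intro set_eqI iffI)
    fix x assume "x \<in> {x \<in> {x \<in> \<X>. x ` (e - {I}) = ?J}. x I = i}"
    then have "x \<in> \<X>" "x ` (e - {I}) = ?J" "x I = i"
      by simp_all
    then show "x \<in> {x \<in> \<X>. x ` e = insert i ?J}"
      using image_eq_insert_Diff[OF assms(1), of x] by simp
  next
    fix x assume x: "x \<in> {x \<in> \<X>. x ` e = insert i ?J}"
    have "x ` e = (y(I := i)) ` e"
      using x by (simp only: fun_upd_image if_P[OF assms(1)] mem_Collect_eq)
    then have "\<forall>I'\<in>e. x I' = (y(I := i)) I'"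
      using image_eq_iff[OF assms(2)] x fun_upd_in_\<X>[OF assms(3) IV that] by blast
    then have "x I = i" "x ` (e - {I}) = ?J"
      using assms(1) by auto
    then show "x \<in> {x \<in> {x \<in> \<X>. x ` (e - {I}) = ?J}. x I = i}"
      using x by simp
  qed
  have "marginal \<mu> (e - {I}) ?J = (\<Sum>i\<in>I. \<Sum>x\<in>{x \<in> {x \<in> \<X>. x ` (e - {I}) = ?J}. x I = i}. \<mu> x)"
    unfolding marginal_def
    by (rule sum.group[symmetric]) (use finite_\<X> finite_block[OF IV] PiE_mem[of _ V _ I] IV in auto)
  also have "\<dots> = (\<Sum>i\<in>I. marginal \<mu> e (insert i ?J))"
    unfolding marginal_def using fibre by simp
  finally show ?thesis .
qed

definition bump :: "(nat set \<Rightarrow> nat) \<Rightarrow> nat set set \<Rightarrow> (nat set \<Rightarrow> real) \<Rightarrow> (nat set \<Rightarrow> nat) \<Rightarrow> real" where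
  "bump x\<^sub>0 e D x = (if \<forall>I \<in> V - e. x I = x\<^sub>0 I then D (x ` e) else 0)"

lemma marginal_bump_same:
  assumes "e \<subseteq> V" "x\<^sub>0 \<in> \<X>" "y \<in> \<X>"
  shows "marginal (bump x\<^sub>0 e D) e (y ` e) = D (y ` e)"
proof -
  define z where "z = restrict (\<lambda>I. if I \<in> e then y I else x\<^sub>0 I) V"
  have z: "z \<in> \<X>"
    using assms(2,3) by (auto simp: z_def PiE_iff)
  have "{x \<in> {x \<in> \<X>. x ` e = y ` e}. \<forall>I \<in> V - e. x I = x\<^sub>0 I} = {z}"
  proof (intro set_eqI iffI)
    fix x assume x: "x \<in> {x \<in> {x \<in> \<X>. x ` e = y ` e}. \<forall>I \<in> V - e. x I = x\<^sub>0 I}"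
    then have "\<forall>I\<in>e. x I = y I"
      using image_eq_iff[OF assms(1), of x y] assms(3) by auto
    then show "x \<in> {z}"
      using x assms(1) by (auto simp: z_def PiE_iff extensional_def fun_eq_iff)
  next
    fix x assume "x \<in> {z}"
    then show "x \<in> {x \<in> {x \<in> \<X>. x ` e = y ` e}. \<forall>I \<in> V - e. x I = x\<^sub>0 I}"
      using z assms(1) by (auto simp: z_def intro!: image_cong)
  qed
  then have "marginal (bump x\<^sub>0 e D) e (y ` e) = D (z ` e)"
    unfolding marginal_def bump_def
    by (simp add: sum.inter_filter[symmetric] finite_\<X>)
  also have "z ` e = y ` e"
    using assms(1) by (auto simp: z_def intro!: image_cong)
  finally show ?thesis .
qed

lemma marginal_bump_other:
  assumes "e \<subseteq> V" "x\<^sub>0 \<in> \<X>" "\<not> e \<subseteq> f"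
    and balanced: "\<And>I y. I \<in> e \<Longrightarrow> y \<in> \<X> \<Longrightarrow> (\<Sum>i\<in>I. D (insert i (y ` (e - {I})))) = 0"
  shows "marginal (bump x\<^sub>0 e D) f J = 0"
proof -
  obtain I where I: "I \<in> e" "I \<notin> f"
    using assms(3) by blast
  have IV: "I \<in> V"
    using I(1) assms(1) by blast
  let ?S = "{x \<in> \<X>. x ` f = J}"
  have closed: "x(I := i) \<in> ?S" if "x \<in> ?S" "i \<in> I" for x i
  proof -
    have "(x(I := i)) ` f = x ` f"
      using I(2) by (intro image_cong) auto
    then show ?thesis
      using that fun_upd_in_\<X>[OF _ IV] by simp
  qed
  have fibre_zero: "(\<Sum>i\<in>I. bump x\<^sub>0 e D (z(I := i))) = 0" if "z \<in> \<X>" for z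
  proof (cases "\<forall>I'\<in>V - e. z I' = x\<^sub>0 I'")
    case True
    then have "bump x\<^sub>0 e D (z(I := i)) = D (insert i (z ` (e - {I})))" for i
      using I(1) by (simp only: bump_def fun_upd_image if_P[OF I(1)]) auto
    then show ?thesis
      using balanced[OF I(1) that] by simp
  next
    case False
    then have "bump x\<^sub>0 e D (z(I := i)) = 0" for i
      using I(1) by (auto simp: bump_def)
    then show ?thesis
      by simp
  qed
  have "marginal (bump x\<^sub>0 e D) f J = (\<Sum>z\<in>{x \<in> ?S. x I = x\<^sub>0 I}. \<Sum>i\<in>I. bump x\<^sub>0 e D (z(I := i)))"
    unfolding marginal_def
    by (rule sum_by_coordinate[OF IV PiE_mem[OF assms(2) IV]]) (use closed in auto)
  also have "\<dots> = 0"
    using fibre_zero by simp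
  finally show ?thesis .
qed

lemma extend_marginals_to_maximal_face:
  assumes eV: "e \<subseteq> V"
    and \<mu>\<^sub>0: "\<And>f y. f \<in> K \<Longrightarrow> y \<in> \<X> \<Longrightarrow> w (y ` f) = marginal \<mu>\<^sub>0 f (y ` f)"
    and maximal: "\<And>f. f \<in> K \<Longrightarrow> \<not> e \<subseteq> f"
    and facets: "\<And>I. I \<in> e \<Longrightarrow> e - {I} \<in> K"
    and consistent: "\<And>I y. I \<in> e \<Longrightarrow> y \<in> \<X> \<Longrightarrow>
      w (y ` (e - {I})) = (\<Sum>i\<in>I. w (insert i (y ` (e - {I}))))"
  shows "\<exists>\<mu>. \<forall>f\<in>insert e K. \<forall>y\<in>\<X>. w (y ` f) = marginal \<mu> f (y ` f)"
proof -
  obtain x\<^sub>0 where x\<^sub>0: "x\<^sub>0 \<in> \<X>"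
    using \<X>_nonempty by blast
  define D where "D J = w J - marginal \<mu>\<^sub>0 e J" for J
  have balanced: "(\<Sum>i\<in>I. D (insert i (y ` (e - {I})))) = 0" if "I \<in> e" "y \<in> \<X>" for I y
    using consistent[OF that] \<mu>\<^sub>0[OF facets[OF that(1)] that(2)] marginal_Diff_block[OF that(1) eV that(2)]
    by (simp add: D_def sum_subtractf)
  have "w (y ` f) = marginal (\<lambda>x. \<mu>\<^sub>0 x + bump x\<^sub>0 e D x) f (y ` f)"
    if "f \<in> insert e K" "y \<in> \<X>" for f y
  proof (cases "f = e")
    case True
    then show ?thesis
      using marginal_bump_same[OF eV x\<^sub>0 that(2), of D] by (simp add: marginal_add D_def)
  next
    case False
    then have "f \<in> K"
      using that(1) by blast
    then show ?thesis
      using marginal_bump_other[OF eV x\<^sub>0 maximal balanced] \<mu>\<^sub>0 that(2) by (simp add: marginal_add)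
  qed
  then show ?thesis
    by blast
qed

lemma exists_signed_measure_with_marginals:
  assumes "finite K" and "\<And>e. e \<in> K \<Longrightarrow> e \<subseteq> V"
    and "\<And>e e'. e \<in> K \<Longrightarrow> e' \<subseteq> e \<Longrightarrow> e' \<in> K"
    and "\<And>e I y. e \<in> K \<Longrightarrow> I \<in> e \<Longrightarrow> y \<in> \<X> \<Longrightarrow>
      w (y ` (e - {I})) = (\<Sum>i\<in>I. w (insert i (y ` (e - {I}))))"
  shows "\<exists>\<mu>. \<forall>e\<in>K. \<forall>y\<in>\<X>. w (y ` e) = marginal \<mu> e (y ` e)"
  using assms
proof (induction K rule: finite_ranking_induct[where f = card])
  case empty
  then show ?case
    by simp
next
  case (insert e K)
  show ?case
  proof (cases "e \<in> K")
    case True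
    then show ?thesis
      using insert by (simp add: insert_absorb)
  next
    case False
    have maximal: "\<not> e \<subseteq> f" if "f \<in> K" for f
    proof
      assume "e \<subseteq> f"
      moreover have "finite f"
        using finite_subset[OF insert.prems(1)[OF insertI2[OF that]] finite_V] .
      ultimately show False
        using card_seteq insert.hyps(2)[OF that] False that by blast
    qed
    have K_down: "f' \<in> K" if "f \<in> K" "f' \<subseteq> f" for f f'
      using insert.prems(2)[OF insertI2[OF that(1)] that(2)] maximal[OF that(1)] that(2) by blast
    have "\<exists>\<mu>. \<forall>f\<in>K. \<forall>y\<in>\<X>. w (y ` f) = marginal \<mu> f (y ` f)"
    proof (rule insert.IH)
      show "f \<subseteq> V" if "f \<in> K" for f
        using insert.prems(1) that by blast
      show "w (y ` (f - {I})) = (\<Sum>i\<in>I. w (insert i (y ` (f - {I}))))"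
        if "f \<in> K" "I \<in> f" "y \<in> \<X>" for f I y
        using insert.prems(3) that by blast
    qed (fact K_down)
    then obtain \<mu>\<^sub>0 where \<mu>\<^sub>0: "\<forall>f\<in>K. \<forall>y\<in>\<X>. w (y ` f) = marginal \<mu>\<^sub>0 f (y ` f)"
      by blast
    show ?thesis
    proof (rule extend_marginals_to_maximal_face)
      show "e \<subseteq> V"
        using insert.prems(1) by blast
      show "w (y ` f) = marginal \<mu>\<^sub>0 f (y ` f)" if "f \<in> K" "y \<in> \<X>" for f y
        using \<mu>\<^sub>0 that by blast
      show "e - {I} \<in> K" if "I \<in> e" for I
        using insert.prems(2)[of e "e - {I}"] that by blast
      show "w (y ` (e - {I})) = (\<Sum>i\<in>I. w (insert i (y ` (e - {I}))))" if "I \<in> e" "y \<in> \<X>" for I y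
        using insert.prems(3) that by blast
    qed (fact maximal)
  qed
qed

end

section \<open>Consistent weights and the affine hull of MC V E\<close>

definition consistent_weights :: "nat set set \<Rightarrow> nat set set set \<Rightarrow> (nat set \<Rightarrow> real) set" where
  "consistent_weights V E =
    {w \<in> RJH V E.
       (\<forall>I\<in>V. wsum w I = 1) \<and>
       (\<forall>e\<in>LV V \<union> E. \<forall>e'\<in>LV V \<union> E. e \<subset> e' \<and> card e' = card e + 1 \<longrightarrow>
          (\<forall>J\<in>JJ e. w J = (\<Sum>J'\<in>{J' \<in> JJ e'. J \<subset> J'}. w J')))}"

lemma consistent_weightsD:
  assumes "w \<in> consistent_weights V E"
  shows "w \<in> RJH V E" and "I \<in> V \<Longrightarrow> wsum w I = 1"
    and "\<lbrakk>e \<in> LV V \<union> E; e' \<in> LV V \<union> E; e \<subset> e'; card e' = card e + 1; J \<in> JJ e\<rbrakk> \<Longrightarrow>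
      w J = (\<Sum>J'\<in>{J' \<in> JJ e'. J \<subset> J'}. w J')"
proof -
  have "\<forall>e\<in>LV V \<union> E. \<forall>e'\<in>LV V \<union> E. e \<subset> e' \<and> card e' = card e + 1 \<longrightarrow>
          (\<forall>J\<in>JJ e. w J = (\<Sum>J'\<in>{J' \<in> JJ e'. J \<subset> J'}. w J'))"
    using assms unfolding consistent_weights_def by blast
  then show "\<lbrakk>e \<in> LV V \<union> E; e' \<in> LV V \<union> E; e \<subset> e'; card e' = card e + 1; J \<in> JJ e\<rbrakk> \<Longrightarrow>
      w J = (\<Sum>J'\<in>{J' \<in> JJ e'. J \<subset> J'}. w J')"
    by blast
qed (use assms in \<open>simp_all add: consistent_weights_def\<close>)

lemma affine_consistent_weights: "affine (consistent_weights V E)"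
  unfolding affine_def
proof (intro ballI allI impI)
  fix w w' :: "nat set \<Rightarrow> real" and u v :: real
  assume "w \<in> consistent_weights V E" "w' \<in> consistent_weights V E" "u + v = 1"
  then show "u *\<^sub>R w + v *\<^sub>R w' \<in> consistent_weights V E"
    by (simp add: consistent_weights_def RJH_def wsum_def scaleR_fun_def sum.distrib
        flip: sum_distrib_left)
qed

locale block_hypergraph = block_family V for V +
  fixes E :: "nat set set set"
  assumes edge_subset: "e \<in> E \<Longrightarrow> e \<subseteq> V"
    and edge_card: "e \<in> E \<Longrightarrow> 2 \<le> card e"
    and downward_closed_edges: "downward_closed E"
begin

lemma face_subset: "e \<in> LV V \<union> E \<Longrightarrow> e \<subseteq> V"
  using edge_subset by (auto simp: LV_def)

lemma face_nonempty: "e \<in> LV V \<union> E \<Longrightarrow> e \<noteq> {}"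
  using edge_card by (fastforce simp: LV_def)

lemma JH_iff: "J \<in> JH V E \<longleftrightarrow> (\<exists>e\<in>LV V \<union> E. J \<in> JJ e)"
  unfolding JH_def by blast

lemma faces_downward_closed:
  assumes "e \<in> insert {} (LV V \<union> E)" "e' \<subseteq> e"
  shows "e' \<in> insert {} (LV V \<union> E)"
proof -
  have "e \<subseteq> V"
    using assms(1) face_subset by blast
  then have "finite e'"
    using finite_subset[OF subset_trans[OF assms(2)] finite_V] by blast
  consider "e' = {}" | I where "e' = {I}" | "2 \<le> card e'"
  proof -
    consider "card e' = 0" | "card e' = 1" | "2 \<le> card e'"
      by linarith
    then show thesis
      using that \<open>finite e'\<close> by cases (auto simp: card_1_singleton_iff)
  qed
  then show ?thesis
  proof cases
    case 2
    then have "I \<in> V"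
      using assms face_subset by blast
    then show ?thesis
      using 2 by (simp add: LV_def)
  next
    case 3
    moreover have "card e' \<le> card e"
      using card_mono[OF finite_subset[OF \<open>e \<subseteq> V\<close> finite_V] assms(2)] .
    ultimately have "2 \<le> card e"
      by linarith
    then have "e \<in> E"
      using assms(1) by (auto simp: LV_def)
    then show ?thesis
      using 3 assms(2) downward_closed_edges unfolding downward_closed_def by simp
  qed simp
qed

lemma SH_eq_prod:
  assumes "w \<in> SH V E" "e \<in> LV V \<union> E" "J \<in> JJ e"
  shows "w J = (\<Prod>i\<in>J. w {i})"
proof -
  obtain x where x: "x \<in> \<X>" "x ` e = J"
    using JJ_obtain_image[OF face_subset] assms(2,3) by blast
  have "J \<noteq> {}" "finite J"
    using x face_nonempty[OF assms(2)] JJ_finite[OF face_subset] assms(2,3) by auto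
  then have "0 < card J"
    by (simp add: card_gt_0_iff)
  then consider "card J = 1" | "card J > 1"
    by linarith
  then show ?thesis
  proof cases
    case 1
    then obtain j where "J = {j}"
      by (rule card_1_singletonE)
    then show ?thesis
      by simp
  next
    case 2
    moreover have "J \<in> JH V E"
      using assms(2,3) JH_iff by blast
    ultimately show ?thesis
      using assms(1) unfolding SH_def by blast
  qed
qed

lemma SH_subset_consistent_weights: "SH V E \<subseteq> consistent_weights V E"
proof
  fix w assume w: "w \<in> SH V E"
  have "w J = (\<Sum>J'\<in>{J' \<in> JJ e'. J \<subset> J'}. w J')"
    if e: "e \<in> LV V \<union> E" and e': "e' \<in> LV V \<union> E" and "e \<subset> e'" "card e' = card e + 1"
      and J: "J \<in> JJ e" for e e' J
  proof -
    have e'V: "e' \<subseteq> V"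
      using face_subset[OF e'] .
    obtain I where I: "I \<in> e'" "e = e' - {I}"
      by (rule psubset_card_Suc_obtain[OF \<open>e \<subset> e'\<close> \<open>card e' = card e + 1\<close> finite_subset[OF e'V finite_V]])
    obtain y where y: "y \<in> \<X>" "y ` e = J"
      using JJ_obtain_image[OF face_subset[OF e] J] by blast
    have IV: "I \<in> V"
      using I(1) e'V by blast
    have "w (insert i J) = w {i} * w J" if i: "i \<in> I" for i
    proof -
      have "insert i J \<in> JJ e'"
        using supersets_in_JJ[OF I(1) e'V y(1)] i y(2) I(2) by blast
      moreover have "i \<notin> J" "finite J"
        using notin_image_Diff_block[OF I(1) e'V y(1) i] y(2) I(2) JJ_finite[OF face_subset[OF e] J] by auto
      ultimately show ?thesis
        using SH_eq_prod[OF w e' \<open>insert i J \<in> JJ e'\<close>] SH_eq_prod[OF w e J] by simp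
    qed
    then have "(\<Sum>J'\<in>{J' \<in> JJ e'. J \<subset> J'}. w J') = wsum w I * w J"
      using sum_supersets_in_JJ[OF I(1) e'V y(1), of w] y(2) I(2)
      by (simp add: wsum_def sum_distrib_right)
    also have "\<dots> = w J"
      using w IV by (simp add: SH_def)
    finally show ?thesis
      by simp
  qed
  then show "w \<in> consistent_weights V E"
    using w by (auto simp: SH_def consistent_weights_def)
qed

lemma singleton_in_JH: "I \<in> V \<Longrightarrow> i \<in> I \<Longrightarrow> {i} \<in> JH V E"
  unfolding JH_iff by (force simp: LV_def JJ_def)

lemma consistent_weights_fun_upd_empty:
  assumes w: "w \<in> consistent_weights V E"
    and "e \<in> insert {} (LV V \<union> E)" "I \<in> e" "y \<in> \<X>"
  shows "(w({} := 1)) (y ` (e - {I})) = (\<Sum>i\<in>I. (w({} := 1)) (insert i (y ` (e - {I}))))"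
proof -
  have e: "e \<in> LV V \<union> E"
    using assms(2,3) by blast
  have eV: "e \<subseteq> V"
    using face_subset[OF e] .
  show ?thesis
  proof (cases "e - {I} = {}")
    case True
    have "wsum w I = 1"
      using consistent_weightsD(2)[OF w] eV assms(3) by blast
    moreover have empty: "y ` (e - {I}) = {}"
      using True by blast
    ultimately show ?thesis
      unfolding empty by (simp add: wsum_def)
  next
    case False
    have "e - {I} \<in> LV V \<union> E"
      using faces_downward_closed[OF assms(2), of "e - {I}"] False by blast
    moreover have "card e = card (e - {I}) + 1"
    proof -
      have "finite e"
        using finite_subset[OF eV finite_V] .
      then have "0 < card e"
        using assms(3) card_gt_0_iff by blast
      then show ?thesis
        using assms(3) \<open>finite e\<close> by (simp add: card_Diff_singleton)
    qed
    moreover have "y ` (e - {I}) \<in> JJ (e - {I})"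
      using image_in_JJ eV assms(4) by blast
    ultimately have "w (y ` (e - {I})) = (\<Sum>J'\<in>{J' \<in> JJ e. y ` (e - {I}) \<subset> J'}. w J')"
      using consistent_weightsD(3)[OF w _ e] assms(3) by blast
    also have "\<dots> = (\<Sum>i\<in>I. w (insert i (y ` (e - {I}))))"
      by (rule sum_supersets_in_JJ[OF assms(3) eV assms(4)])
    finally show ?thesis
      using False by simp
  qed
qed

definition vertex :: "(nat set \<Rightarrow> nat) \<Rightarrow> nat set \<Rightarrow> real" where
  "vertex x J = of_bool (J \<in> JH V E \<and> J \<subseteq> x ` V)"

lemma vertex_JJ:
  assumes "e \<in> LV V \<union> E" "J \<in> JJ e" "x \<in> \<X>"
  shows "vertex x J = of_bool (x ` e = J)"
proof -
  obtain y where y: "y \<in> \<X>" "y ` e = J"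
    using JJ_obtain_image[OF face_subset[OF assms(1)] assms(2)] by blast
  have "J \<subseteq> x ` V \<longleftrightarrow> x ` e = J"
    using image_subset_image_iff[OF face_subset[OF assms(1)] assms(3) y(1)] y(2) by simp
  moreover have "J \<in> JH V E"
    using assms(1,2) JH_iff by blast
  ultimately show ?thesis
    by (simp add: vertex_def)
qed

lemma vertex_singleton:
  assumes "I \<in> V" "i \<in> I" "x \<in> \<X>"
  shows "vertex x {i} = of_bool (x I = i)"
proof -
  have "{I} \<in> LV V" "{i} \<in> JJ {I}"
    using assms(1,2) by (auto simp: LV_def JJ_def)
  then show ?thesis
    using vertex_JJ[of "{I}" "{i}" x] assms(3) by auto
qed

lemma vertex_in_SH:
  assumes x: "x \<in> \<X>"
  shows "vertex x \<in> SH V E"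
proof -
  have "wsum (vertex x) I = 1" if I: "I \<in> V" for I
  proof -
    have "wsum (vertex x) I = (\<Sum>i\<in>I. if i = x I then 1 else 0)"
      unfolding wsum_def by (rule sum.cong) (auto simp: vertex_singleton[OF I _ x])
    then show ?thesis
      using PiE_mem[OF x I] finite_block[OF I] by simp
  qed
  moreover have "vertex x J = (\<Prod>i\<in>J. vertex x {i})" if J: "J \<in> JH V E" for J
  proof -
    obtain e where e: "e \<in> LV V \<union> E" "J \<in> JJ e"
      using J JH_iff by blast
    have "vertex x {j} = of_bool (j \<in> x ` V)" if j: "j \<in> J" for j
    proof -
      obtain I where "I \<in> e" "j \<in> I"
        using e(2) j unfolding JJ_def by blast
      then show ?thesis
        using singleton_in_JH face_subset[OF e(1)] by (auto simp: vertex_def)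
    qed
    then have "(\<Prod>i\<in>J. vertex x {i}) = (\<Prod>j\<in>J. of_bool (j \<in> x ` V))"
      by simp
    also have "\<dots> = of_bool (J \<subseteq> x ` V)"
      unfolding subset_eq by (rule prod_of_bool[OF JJ_finite[OF face_subset[OF e(1)] e(2)]])
    finally show ?thesis
      using J by (simp add: vertex_def)
  qed
  moreover have "vertex x J \<in> {0, 1}" for J
    by (simp add: vertex_def)
  moreover have "vertex x \<in> RJH V E"
    by (simp add: RJH_def vertex_def)
  ultimately show ?thesis
    unfolding SH_def by blast
qed

lemma consistent_weights_obtain_marginals:
  assumes w: "w \<in> consistent_weights V E"
  obtains \<mu> where "sum \<mu> \<X> = 1" and "\<And>e J. e \<in> LV V \<union> E \<Longrightarrow> J \<in> JJ e \<Longrightarrow> w J = marginal \<mu> e J"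
proof -
  \<comment> \<open>Setting the weight of the empty set to 1 turns the normalisation wsum w I = 1 into the
    consistency condition at the face {I}.\<close>
  define K where "K = insert {} (LV V \<union> E)"
  have "finite K"
    using finite_subset[of K "Pow V"] face_subset finite_V by (auto simp: K_def)
  then obtain \<mu> where \<mu>: "\<forall>e\<in>K. \<forall>y\<in>\<X>. (w({} := 1)) (y ` e) = marginal \<mu> e (y ` e)"
    using exists_signed_measure_with_marginals[of K "w({} := 1)"] face_subset faces_downward_closed
      consistent_weights_fun_upd_empty[OF w] unfolding K_def by blast
  obtain x\<^sub>0 where x\<^sub>0: "x\<^sub>0 \<in> \<X>"
    using \<X>_nonempty by blast
  have "{} \<in> K"
    by (simp add: K_def)
  then have "(w({} := 1)) (x\<^sub>0 ` {}) = marginal \<mu> {} (x\<^sub>0 ` {})"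
    using \<mu> x\<^sub>0 by blast
  then have "sum \<mu> \<X> = 1"
    by (simp add: marginal_empty)
  moreover have "w J = marginal \<mu> e J" if e: "e \<in> LV V \<union> E" and J: "J \<in> JJ e" for e J
  proof -
    obtain y where y: "y \<in> \<X>" "y ` e = J"
      using JJ_obtain_image[OF face_subset[OF e] J] by blast
    have "e \<in> K"
      using e by (simp add: K_def)
    then have "(w({} := 1)) (y ` e) = marginal \<mu> e (y ` e)"
      using \<mu> y(1) by blast
    moreover have "J \<noteq> {}"
      using y(2) face_nonempty[OF e] by blast
    ultimately show ?thesis
      using y(2) by simp
  qed
  ultimately show thesis
    by (rule that)
qed

lemma vertex_combination_JJ:
  assumes "e \<in> LV V \<union> E" "J \<in> JJ e"
  shows "(\<Sum>x\<in>\<X>. \<mu> x *\<^sub>R vertex x) J = marginal \<mu> e J"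
proof -
  have "(\<Sum>x\<in>\<X>. \<mu> x *\<^sub>R vertex x) J = (\<Sum>x\<in>\<X>. \<mu> x * of_bool (x ` e = J))"
    by (simp add: sum_fun_apply scaleR_fun_def vertex_JJ[OF assms])
  also have "\<dots> = marginal \<mu> e J"
    unfolding marginal_def sum.inter_filter[OF finite_\<X>] by (intro sum.cong) auto
  finally show ?thesis .
qed

lemma consistent_weights_subset_affine_hull: "consistent_weights V E \<subseteq> affine hull SH V E"
proof
  fix w assume w: "w \<in> consistent_weights V E"
  obtain \<mu> where total: "sum \<mu> \<X> = 1"
    and marginals: "\<And>e J. e \<in> LV V \<union> E \<Longrightarrow> J \<in> JJ e \<Longrightarrow> w J = marginal \<mu> e J"
    using consistent_weights_obtain_marginals[OF w] by blast
  have "w J = (\<Sum>x\<in>\<X>. \<mu> x *\<^sub>R vertex x) J" for J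
  proof (cases "J \<in> JH V E")
    case True
    then obtain e where "e \<in> LV V \<union> E" "J \<in> JJ e"
      using JH_iff by blast
    then show ?thesis
      using marginals vertex_combination_JJ by simp
  next
    case False
    then show ?thesis
      using consistent_weightsD(1)[OF w] by (simp add: sum_fun_apply scaleR_fun_def vertex_def RJH_def)
  qed
  then have "w = (\<Sum>x\<in>\<X>. \<mu> x *\<^sub>R vertex x)"
    by (rule ext)
  moreover have "vertex ` \<X> \<subseteq> SH V E"
    using vertex_in_SH by blast
  ultimately show "w \<in> affine hull SH V E"
    using affine_hull_sum_mem[OF finite_\<X> total] by simp
qed

theorem affine_hull_MC: "affine hull (MC V E) = consistent_weights V E"
  unfolding MC_def affine_hull_convex_hull
proof
  show "affine hull SH V E \<subseteq> consistent_weights V E"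
    using SH_subset_consistent_weights affine_consistent_weights by (rule hull_minimal)
qed (rule consistent_weights_subset_affine_hull)

end

lemma block_hypergraphI:
  assumes "is_hypergraph n V E" "downward_closed E"
  shows "block_hypergraph V E"
proof
  have blocks: "I \<subseteq> {1..n}" "2 \<le> card I" if "I \<in> V" for I
    using assms(1) that unfolding is_hypergraph_def by auto
  show "finite V"
    using finite_subset[of V "Pow {1..n}"] blocks by auto
  show "finite I" "I \<noteq> {}" if "I \<in> V" for I
    using blocks[OF that] finite_subset by fastforce+
qed (use assms in \<open>auto simp: is_hypergraph_def\<close>)

theorem corollary3p7:
  fixes n :: nat and V :: "nat set set" and E :: "nat set set set"
  assumes "0 < n"
    and "is_hypergraph n V E"
    and "\<Union>V = {1..n}"
    and "downward_closed E"
  shows "affine hull (MC V E) =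
    {w \<in> RJH V E.
       (\<forall>I\<in>V. wsum w I = 1) \<and>
       (\<forall>e\<in>LV V \<union> E. \<forall>e'\<in>LV V \<union> E. e \<subset> e' \<and> card e' = card e + 1 \<longrightarrow>
          (\<forall>J\<in>JJ e. w J = (\<Sum>J'\<in>{J' \<in> JJ e'. J \<subset> J'}. w J')))}"
proof -
  interpret block_hypergraph V E
    using assms(2,4) by (rule block_hypergraphI)
  show ?thesis
    using affine_hull_MC unfolding consistent_weights_def .
qed

end
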